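(* Let $n\ge 7$ be an integer. Every connected graph $G$ of order $n$ and size at most $\lfloor 3n/2\rfloor$ has an independent minimum vertex cut. Moreover, the bound is best possible: for every integer $n\ge 7$ there exists a connected graph of order $n$ and size $\lfloor 3n/2\rfloor+1$ which has no independent minimum vertex cut.
   Context: All graphs are finite and simple. The order of a graph is its number of vertices and the size is its number of edges. A vertex cut of a connected graph $G$ is a set $S\subset V(G)$ such that $G-S$ is disconnected. If $G$ has connectivity $k$, a vertex cut $S$ is called minimum if $|S|=k$. A vertex cut $S$ is called an independent vertex cut if $S$ is an independent set of $G$. *)

theory Defs
  imports Main
begin

definition simple_graph :: "'a set \<Rightarrow> 'a set set \<Rightarrow> bool" where
  "simple_graph V E \<longleftrightarrow> finite V \<and> (\<forall>e\<in>E. \<exists>u v. e = {u, v} \<and> u \<noteq> v \<and> u \<in> V \<and> v \<in> V)"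

definition order :: "'a set \<Rightarrow> 'a set set \<Rightarrow> nat" where
  "order V E = card V"

definition graph_size :: "'a set \<Rightarrow> 'a set set \<Rightarrow> nat" where
  "graph_size V E = card E"

definition reach_in :: "'a set set \<Rightarrow> 'a set \<Rightarrow> 'a \<Rightarrow> 'a \<Rightarrow> bool" where
  "reach_in E W u v \<longleftrightarrow> (\<lambda>x y. x \<in> W \<and> y \<in> W \<and> {x, y} \<in> E)\<^sup>*\<^sup>* u v"

definition connected_graph :: "'a set \<Rightarrow> 'a set set \<Rightarrow> bool" where
  "connected_graph V E \<longleftrightarrow> V \<noteq> {} \<and> (\<forall>u\<in>V. \<forall>v\<in>V. reach_in E V u v)"

definition vertex_cut :: "'a set \<Rightarrow> 'a set set \<Rightarrow> 'a set \<Rightarrow> bool" where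
  "vertex_cut V E S \<longleftrightarrow> S \<subseteq> V \<and>
     (\<exists>u\<in>V - S. \<exists>v\<in>V - S. \<not> reach_in E (V - S) u v)"

definition min_vertex_cut :: "'a set \<Rightarrow> 'a set set \<Rightarrow> 'a set \<Rightarrow> bool" where
  "min_vertex_cut V E S \<longleftrightarrow> vertex_cut V E S \<and> (\<forall>T. vertex_cut V E T \<longrightarrow> card S \<le> card T)"

definition independent_set :: "'a set \<Rightarrow> 'a set set \<Rightarrow> 'a set \<Rightarrow> bool" where
  "independent_set V E S \<longleftrightarrow> S \<subseteq> V \<and> (\<forall>u\<in>S. \<forall>v\<in>S. {u, v} \<notin> E)"

definition has_indep_min_cut :: "'a set \<Rightarrow> 'a set set \<Rightarrow> bool" where
  "has_indep_min_cut V E \<longleftrightarrow> (\<exists>S. min_vertex_cut V E S \<and> independent_set V E S)"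

end

theory Submission
  imports Defs
begin

(* A graph with at most 3n/2 edges has a vertex of degree at most 3, whose neighbourhood is a
   vertex cut once n \<ge> 7; so the connectivity \<kappa> is at most 3, and for \<kappa> \<le> 1 every minimum
   cut is independent.

   If \<kappa> = 2 and every 2-cut spans an edge, a vertex of degree 2 has adjacent neighbours and can
   be deleted without creating a cut vertex or a non-adjacent 2-cut; induction on this deletion
   gives 2m \<ge> 3n + 1. So the graph is cubic, and in an adjacent 2-cut {u, v} the vertex u can be
   traded for its unique neighbour on one side, which yields an independent 2-cut (or a cut vertex).

   If \<kappa> = 3 the graph is cubic. Some neighbourhood N(c) is a dependent 3-cut, giving a triangle
   a b c with outer neighbours a', b', c'. Unless one of the cuts {a, b', c'}, {b, c', a'},
   {c, a', b'} is independent, a' b' c' is a triangle too, and the six vertices form a whole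
   component, contradicting n \<ge> 7.

   Sharpness: take the prism C_k \<times> K_2 with k = (n - 1) div 2 and join each of the remaining one
   or two vertices to both ends of the rung {0, k}. Then {0, k} is a cut, every cut with at most
   two vertices contains both 0 and k, and these are adjacent. *)

section \<open>Reachability, degrees and vertex cuts\<close>

definition neighbours :: "'a set set \<Rightarrow> 'a \<Rightarrow> 'a set" where
  "neighbours E v = {u. {v, u} \<in> E}"

definition degree :: "'a set set \<Rightarrow> 'a \<Rightarrow> nat" where
  "degree E v = card (neighbours E v)"

definition no_cut_vertex :: "'a set \<Rightarrow> 'a set set \<Rightarrow> bool" where
  "no_cut_vertex V E \<longleftrightarrow> (\<forall>z. \<not> vertex_cut V E {z})"

definition simplicial :: "'a set set \<Rightarrow> 'a \<Rightarrow> bool" where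
  "simplicial E w \<longleftrightarrow> (\<forall>p q. {w, p} \<in> E \<longrightarrow> {w, q} \<in> E \<longrightarrow> p \<noteq> q \<longrightarrow> {p, q} \<in> E)"

definition two_cuts_adjacent :: "'a set \<Rightarrow> 'a set set \<Rightarrow> bool" where
  "two_cuts_adjacent V E \<longleftrightarrow> (\<forall>a b. a \<noteq> b \<longrightarrow> vertex_cut V E {a, b} \<longrightarrow> {a, b} \<in> E)"

lemma mem_neighbours [simp]: "u \<in> neighbours E v \<longleftrightarrow> {v, u} \<in> E"
  by (simp add: neighbours_def)

lemma reach_in_refl [simp]: "reach_in E W p p"
  by (simp add: reach_in_def)

lemma reach_in_edge: "x \<in> W \<Longrightarrow> y \<in> W \<Longrightarrow> {x, y} \<in> E \<Longrightarrow> reach_in E W x y"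
  by (auto simp: reach_in_def)

lemma reach_in_trans: "reach_in E W x y \<Longrightarrow> reach_in E W y z \<Longrightarrow> reach_in E W x z"
  unfolding reach_in_def by (rule rtranclp_trans)

lemma reach_in_step:
  "reach_in E W x y \<Longrightarrow> y \<in> W \<Longrightarrow> z \<in> W \<Longrightarrow> {y, z} \<in> E \<Longrightarrow> reach_in E W x z"
  using reach_in_trans reach_in_edge by metis

lemma reach_in_sym:
  assumes "reach_in E W x y"
  shows "reach_in E W y x"
  using assms unfolding reach_in_def
proof (induction rule: rtranclp_induct)
  case (step y z)
  then show ?case by (auto simp: insert_commute intro: converse_rtranclp_into_rtranclp)
qed simp

lemma reach_in_closed:
  assumes "reach_in E W p q" "p \<in> X"
    and "\<And>s t. s \<in> X \<Longrightarrow> s \<in> W \<Longrightarrow> t \<in> W \<Longrightarrow> {s, t} \<in> E \<Longrightarrow> t \<in> X"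
  shows "q \<in> X"
  using assms(1) unfolding reach_in_def
  by (induction rule: rtranclp_induct) (use assms in auto)

lemma reach_in_endpoints:
  assumes "reach_in E W p q" "p \<noteq> q"
  shows "p \<in> W" "q \<in> W"
  using assms unfolding reach_in_def
  by (induction rule: rtranclp_induct) auto

lemma reach_in_subgraph:
  assumes "reach_in E W p q" "W \<subseteq> W'"
    and "\<And>x y. x \<in> W \<Longrightarrow> y \<in> W \<Longrightarrow> {x, y} \<in> E \<Longrightarrow> {x, y} \<in> E'"
  shows "reach_in E' W' p q"
  using assms(1) unfolding reach_in_def
proof (induction rule: rtranclp_induct)
  case (step y z)
  then show ?case using assms(2,3) by (auto intro: rtranclp.rtrancl_into_rtrancl)
qed simp

lemma reach_in_via:
  assumes "\<And>x. x \<in> W \<Longrightarrow> reach_in E W x h" "a \<in> W" "b \<in> W"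
  shows "reach_in E W a b"
  using assms by (meson reach_in_sym reach_in_trans)

lemma reach_in_pair_edge:
  assumes "reach_in E {a, b} a b" "a \<noteq> b"
  shows "{a, b} \<in> E"
proof (rule ccontr)
  assume "{a, b} \<notin> E"
  then have "b \<in> {a}"
    by (rule_tac reach_in_closed[OF assms(1)]) auto
  with assms(2) show False by simp
qed

lemma connected_graph_iff: "connected_graph V E \<longleftrightarrow> V \<noteq> {} \<and> \<not> vertex_cut V E {}"
  by (auto simp: connected_graph_def vertex_cut_def)

lemma vertex_cut_closed_set:
  assumes "S \<subseteq> V" "p \<in> X" "p \<in> V - S" "q \<in> V - S" "q \<notin> X"
    and "\<And>s t. s \<in> X \<Longrightarrow> s \<in> V - S \<Longrightarrow> t \<in> V - S \<Longrightarrow> {s, t} \<in> E \<Longrightarrow> t \<in> X"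
  shows "vertex_cut V E S"
proof -
  have "\<not> reach_in E (V - S) p q"
    using reach_in_closed[of E "V - S" p q X] assms(2,5,6) by blast
  then show ?thesis unfolding vertex_cut_def using assms(1,3,4) by blast
qed

lemma min_vertex_cut_exists:
  assumes "vertex_cut V E S"
  obtains S0 where "min_vertex_cut V E S0"
  using ex_has_least_nat[of "vertex_cut V E" S card] assms
  unfolding min_vertex_cut_def by blast

lemma has_indep_min_cutI:
  assumes "min_vertex_cut V E S" "vertex_cut V E T" "card T \<le> card S" "independent_set V E T"
  shows "has_indep_min_cut V E"
  using assms unfolding has_indep_min_cut_def min_vertex_cut_def by (meson le_trans)

lemma card_doubleton_le: "card {a, b} \<le> 2"
  by (simp add: card_insert_if)

lemma card_3_distinct: "card {a, b, c} = 3 \<Longrightarrow> a \<noteq> b \<and> a \<noteq> c \<and> b \<noteq> c"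
  by (auto simp: card_insert_if split: if_splits)

lemma card_3_obtain_third:
  assumes "card N = 3" "x \<in> N" "y \<in> N" "x \<noteq> y"
  obtains z where "N = {x, y, z}"
proof -
  have "finite N" using assms(1) card.infinite by force
  then have "card (N - {x, y}) = 1" using assms by (simp add: card_Diff_subset)
  then obtain z where "N - {x, y} = {z}" by (rule card_1_singletonE)
  then have "N = {x, y, z}" using assms(2,3) by auto
  then show thesis by (rule that)
qed

lemma exists_not_in:
  assumes "finite A" "card A < card V"
  obtains z where "z \<in> V" "z \<notin> A"
  using assms card_mono[of A V] by (metis not_le subsetI)

lemma neighbour_in_component:
  assumes sep: "\<not> reach_in E (V - {u, v}) p q" and "p \<in> V - {u, v}" "q \<in> V - {u, v}"
    and reach: "reach_in E (V - {v}) p q"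
  obtains a where "a \<in> V - {u, v}" "reach_in E (V - {u, v}) p a" "{a, u} \<in> E"
proof (rule ccontr)
  assume no_nb: "\<not> thesis"
  let ?C = "{z \<in> V - {u, v}. reach_in E (V - {u, v}) p z}"
  have "q \<in> ?C"
  proof (rule reach_in_closed[OF reach])
    show "p \<in> ?C" using assms(2) by simp
    fix s t assume "s \<in> ?C" "t \<in> V - {v}" "{s, t} \<in> E"
    moreover from this have "t \<noteq> u" using that no_nb by blast
    ultimately show "t \<in> ?C" using reach_in_step[of E "V - {u, v}" p s t] by auto
  qed
  with sep show False by simp
qed

context
  fixes V :: "'a set" and E :: "'a set set"
  assumes graph: "simple_graph V E"
begin

lemma finite_vertices: "finite V"
  using graph by (simp add: simple_graph_def)

lemma edgeE:
  assumes "e \<in> E"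
  obtains u v where "e = {u, v}" "u \<noteq> v" "u \<in> V" "v \<in> V"
  using graph assms unfolding simple_graph_def by blast

lemma edge_vertices: "{x, y} \<in> E \<Longrightarrow> x \<noteq> y \<and> x \<in> V \<and> y \<in> V"
  by (erule edgeE) (auto simp: doubleton_eq_iff)

lemma finite_edges: "finite E"
proof (rule finite_subset)
  show "E \<subseteq> Pow V" by (auto elim: edgeE)
qed (simp add: finite_vertices)

lemma neighbours_subset: "neighbours E v \<subseteq> V"
  using edge_vertices by auto

lemma finite_neighbours: "finite (neighbours E v)"
  using finite_subset[OF neighbours_subset finite_vertices] .

lemma no_loop: "{v} \<notin> E"
  using edge_vertices[of v v] by (metis insert_absorb2)

lemma not_in_neighbours_self: "v \<notin> neighbours E v"
  by (simp add: no_loop)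

lemma degree_eq_card_incident: "degree E v = card {e \<in> E. v \<in> e}"
proof -
  have "bij_betw (\<lambda>u. {v, u}) (neighbours E v) {e \<in> E. v \<in> e}"
  proof (rule bij_betwI')
    fix e assume e: "e \<in> {e \<in> E. v \<in> e}"
    then obtain a b where "e = {a, b}" by (blast elim: edgeE)
    with e have "e = {v, if a = v then b else a}" by auto
    with e show "\<exists>u\<in>neighbours E v. e = {v, u}" by auto
  qed (auto simp: doubleton_eq_iff)
  then show ?thesis unfolding degree_def by (rule bij_betw_same_card)
qed

lemma sum_degree: "(\<Sum>v\<in>V. degree E v) = 2 * card E"
proof -
  have "(\<Sum>v\<in>V. card {e \<in> E. v \<in> e}) = 2 * card E"
  proof (rule sum_multicount[OF finite_vertices finite_edges])
    show "\<forall>e\<in>E. card {v \<in> V. v \<in> e} = 2"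
    proof
      fix e assume "e \<in> E"
      then obtain u v where "e = {u, v}" "u \<noteq> v" "u \<in> V" "v \<in> V" by (rule edgeE)
      then have "{x \<in> V. x \<in> e} = {u, v}" by auto
      with \<open>u \<noteq> v\<close> show "card {x \<in> V. x \<in> e} = 2" by simp
    qed
  qed
  then show ?thesis by (simp add: degree_eq_card_incident)
qed

lemma card_edges_delete_vertex: "card E = card {e \<in> E. w \<notin> e} + degree E w"
proof -
  have "card E = card ({e \<in> E. w \<notin> e} \<union> {e \<in> E. w \<in> e})"
    by (rule arg_cong[where f = card]) auto
  also have "\<dots> = card {e \<in> E. w \<notin> e} + card {e \<in> E. w \<in> e}"
    using finite_edges by (intro card_Un_disjoint) auto
  finally show ?thesis by (simp add: degree_eq_card_incident)
qed

lemma exists_degree_less: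
  assumes "2 * card E < k * card V"
  obtains v where "v \<in> V" "degree E v < k"
proof (rule ccontr)
  assume "\<not> thesis"
  then have "\<And>v. v \<in> V \<Longrightarrow> k \<le> degree E v" using that not_le by blast
  then have "card V * k \<le> (\<Sum>v\<in>V. degree E v)" by (rule sum_bounded_below[where 'a = nat, simplified])
  with assms show False by (simp add: sum_degree mult.commute)
qed

lemma regular_if_min_degree:
  assumes "\<forall>v\<in>V. k \<le> degree E v" "2 * card E \<le> k * card V"
  shows "\<forall>v\<in>V. degree E v = k"
proof (rule ccontr)
  assume "\<not> ?thesis"
  then obtain w where "w \<in> V" "k < degree E w" using assms(1) le_neq_implies_less by blast
  then have "(\<Sum>v\<in>V. k) < (\<Sum>v\<in>V. degree E v)"
    using assms(1) by (intro sum_strict_mono_ex1[OF finite_vertices]) auto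
  with assms(2) show False by (simp add: sum_degree mult.commute)
qed

lemma vertex_cut_separating:
  assumes "S \<subseteq> V" "x \<in> X" "X \<subseteq> V - S" "card (S \<union> X) < card V"
    and "\<And>y. y \<in> X \<Longrightarrow> neighbours E y \<subseteq> S \<union> X"
  shows "vertex_cut V E S"
proof -
  have "finite (S \<union> X)" using assms(1,3) finite_vertices by (meson Diff_subset finite_Un finite_subset)
  then obtain q where "q \<in> V" "q \<notin> S \<union> X" using assms(4) by (rule exists_not_in)
  then show ?thesis
    using assms by (intro vertex_cut_closed_set[of S V x X q]) fastforce+
qed

lemma neighbours_vertex_cut:
  assumes "w \<in> V" "degree E w + 1 < card V"
  shows "vertex_cut V E (neighbours E w)"
proof (rule vertex_cut_separating)
  show "card (neighbours E w \<union> {w}) < card V"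
    using assms(2) finite_neighbours not_in_neighbours_self by (simp add: degree_def)
qed (use assms(1) neighbours_subset not_in_neighbours_self in auto)

lemma independent_set_pair:
  assumes "a \<in> V" "b \<in> V" "{a, b} \<notin> E"
  shows "independent_set V E {a, b}"
  using assms edge_vertices no_loop unfolding independent_set_def by (auto simp: insert_commute)

lemma independent_set_triple:
  assumes "{x, y, z} \<subseteq> V" "{x, y} \<notin> E" "{x, z} \<notin> E" "{y, z} \<notin> E"
  shows "independent_set V E {x, y, z}"
  using assms no_loop unfolding independent_set_def by (auto simp: insert_commute)

lemma independent_set_singleton: "a \<in> V \<Longrightarrow> independent_set V E {a}"
  using independent_set_pair[of a a] no_loop by simp

lemma reach_in_avoid_simplicial:
  assumes simplicial: "simplicial E w"
    and reach: "reach_in E W a b" and "a \<noteq> w" "b \<noteq> w"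
  shows "reach_in E (W - {w}) a b"
proof -
  define W' where "W' = W - {w}"
  \<comment> \<open>closed under edges because any two neighbours of \<open>w\<close> are adjacent, so \<open>w\<close> can be bypassed\<close>
  define X where
    "X = {z. reach_in E W' a z} \<union> {z. z = w \<and> (\<exists>p\<in>W'. {w, p} \<in> E \<and> reach_in E W' a p)}"
  have "b \<in> X"
  proof (rule reach_in_closed[OF reach])
    show "a \<in> X" by (simp add: X_def)
    fix s t assume s: "s \<in> X" "s \<in> W" and t: "t \<in> W" and st: "{s, t} \<in> E"
    show "t \<in> X"
    proof (cases "s = w")
      case True
      then obtain p where p: "p \<in> W'" "{w, p} \<in> E" "reach_in E W' a p"
        using s(1) reach_in_endpoints(2)[of E W' a w] \<open>a \<noteq> w\<close> by (auto simp: X_def W'_def)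
      have "t \<in> W'" using t st True edge_vertices by (auto simp: W'_def)
      show ?thesis
      proof (cases "t = p")
        case False
        then have "{p, t} \<in> E" using simplicial p(2) st True by (auto simp: simplicial_def)
        then show ?thesis using reach_in_step[OF p(3) p(1) \<open>t \<in> W'\<close>] by (simp add: X_def)
      qed (use p in \<open>simp add: X_def\<close>)
    next
      case False
      then have s': "s \<in> W'" "reach_in E W' a s" using s by (auto simp: X_def W'_def)
      show ?thesis
      proof (cases "t = w")
        case True
        then show ?thesis using s' st by (auto simp: X_def insert_commute)
      next
        case False
        then show ?thesis using reach_in_step[OF s'(2,1) _ st] t by (simp add: X_def W'_def)
      qed
    qed
  qed
  with \<open>b \<noteq> w\<close> show ?thesis by (simp add: X_def W'_def)
qed

lemma simple_graph_delete_vertex: "simple_graph (V - {w}) {e \<in> E. w \<notin> e}"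
  using finite_vertices unfolding simple_graph_def by (auto elim!: edgeE)

lemma vertex_cut_delete_simplicial:
  assumes simplicial: "simplicial E w"
    and cut: "vertex_cut (V - {w}) {e \<in> E. w \<notin> e} S"
  shows "vertex_cut V E S"
proof -
  obtain a b where S: "S \<subseteq> V - {w}" and ab: "a \<in> V - {w} - S" "b \<in> V - {w} - S"
    and sep: "\<not> reach_in {e \<in> E. w \<notin> e} (V - {w} - S) a b"
    using cut unfolding vertex_cut_def by blast
  have "\<not> reach_in E (V - S) a b"
  proof
    assume "reach_in E (V - S) a b"
    then have "reach_in E (V - S - {w}) a b"
      using reach_in_avoid_simplicial[OF simplicial] ab by blast
    then have "reach_in {e \<in> E. w \<notin> e} (V - {w} - S) a b"
      by (rule reach_in_subgraph) auto
    with sep show False ..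
  qed
  then show ?thesis using S ab unfolding vertex_cut_def by blast
qed

lemma small_graph_complete:
  assumes "connected_graph V E" "no_cut_vertex V E" "card V \<le> 3"
    and "u \<in> V" "v \<in> V" "u \<noteq> v"
  shows "{u, v} \<in> E"
proof -
  define Z where "Z = V - {u, v}"
  have "card Z \<le> 1" using assms(3-6) finite_vertices by (simp add: Z_def card_Diff_subset)
  moreover have "finite Z" using finite_vertices by (simp add: Z_def)
  ultimately have "Z = {} \<or> (\<exists>z. Z = {z})" by (auto simp: le_Suc_eq card_1_singleton_iff)
  then have "\<not> vertex_cut V E Z"
    using assms(1,2) by (auto simp: connected_graph_iff no_cut_vertex_def)
  moreover have "V - Z = {u, v}" "Z \<subseteq> V" using assms(4,5) by (auto simp: Z_def)
  ultimately have "reach_in E {u, v} u v" unfolding vertex_cut_def by auto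
  then show ?thesis using assms(6) by (rule reach_in_pair_edge)
qed

lemma small_graph_edge_bound:
  assumes "connected_graph V E" "no_cut_vertex V E" "card V \<le> 3"
  shows "card V * (card V - 1) \<le> 2 * card E"
proof -
  have "card V - 1 \<le> degree E v" if "v \<in> V" for v
  proof -
    have "V - {v} \<subseteq> neighbours E v"
    proof
      fix x assume "x \<in> V - {v}"
      then have "{v, x} \<in> E" by (intro small_graph_complete[OF assms that]) auto
      then show "x \<in> neighbours E v" by simp
    qed
    then have "card (V - {v}) \<le> degree E v"
      unfolding degree_def by (rule card_mono[OF finite_neighbours])
    then show ?thesis using that by simp
  qed
  then show ?thesis
    using sum_bounded_below[of V "card V - 1" "degree E"] by (simp add: sum_degree)
qed

lemma delete_simplicial_vertex:
  assumes conn: "connected_graph V E" and no_cut: "no_cut_vertex V E"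
    and adj: "two_cuts_adjacent V E"
    and simplicial: "simplicial E w"
    and "2 \<le> card V"
  shows "connected_graph (V - {w}) {e \<in> E. w \<notin> e}" "no_cut_vertex (V - {w}) {e \<in> E. w \<notin> e}"
    "two_cuts_adjacent (V - {w}) {e \<in> E. w \<notin> e}"
proof -
  note cut = vertex_cut_delete_simplicial[OF simplicial]
  have "V - {w} \<noteq> {}"
  proof
    assume "V - {w} = {}"
    then have "card V \<le> card {w}" by (intro card_mono) auto
    with \<open>2 \<le> card V\<close> show False by simp
  qed
  then show "connected_graph (V - {w}) {e \<in> E. w \<notin> e}"
    using conn cut by (auto simp: connected_graph_iff)
  show "no_cut_vertex (V - {w}) {e \<in> E. w \<notin> e}"
    using no_cut cut by (auto simp: no_cut_vertex_def)
  show "two_cuts_adjacent (V - {w}) {e \<in> E. w \<notin> e}"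
    unfolding two_cuts_adjacent_def
  proof (intro allI impI)
    fix a b assume "a \<noteq> b" "vertex_cut (V - {w}) {e \<in> E. w \<notin> e} {a, b}"
    then have "{a, b} \<in> E" "w \<notin> {a, b}"
      using adj cut by (auto simp: two_cuts_adjacent_def vertex_cut_def)
    then show "{a, b} \<in> {e \<in> E. w \<notin> e}" by simp
  qed
qed

lemma degree_2_vertex_simplicial:
  assumes "connected_graph V E" "no_cut_vertex V E" "two_cuts_adjacent V E"
    and "w \<in> V" "degree E w \<le> 2" "4 \<le> card V"
  shows "degree E w = 2" "simplicial E w"
proof -
  have cut: "vertex_cut V E (neighbours E w)"
    using assms(4-6) by (intro neighbours_vertex_cut) auto
  then have "neighbours E w \<noteq> {}" using assms(1) by (auto simp: connected_graph_iff)
  moreover have "\<not> (\<exists>x. neighbours E w = {x})" using cut assms(2) by (auto simp: no_cut_vertex_def)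
  ultimately have "degree E w \<noteq> 0" "degree E w \<noteq> 1"
    using finite_neighbours by (auto simp: degree_def card_1_singleton_iff)
  then show deg: "degree E w = 2" using assms(5) by simp
  then obtain x y where xy: "neighbours E w = {x, y}" "x \<noteq> y"
    unfolding degree_def by (meson card_2_iff)
  then have "{x, y} \<in> E" using cut assms(3) by (auto simp: two_cuts_adjacent_def)
  then show "simplicial E w"
    using xy unfolding simplicial_def by (auto simp: insert_commute set_eq_iff)
qed

section \<open>Cubic graphs\<close>

lemma cubic_unique_neighbour_in_component:
  assumes cubic: "\<forall>x\<in>V. degree E x = 3" and no_cut: "no_cut_vertex V E" and "{u, v} \<in> E"
    and sep: "\<not> reach_in E (V - {u, v}) p q" and pq: "p \<in> V - {u, v}" "q \<in> V - {u, v}"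
  obtains a where "a \<in> V - {u, v}" "reach_in E (V - {u, v}) p a" "{a, u} \<in> E"
    and "\<And>s. s \<in> V - {u, v} \<Longrightarrow> reach_in E (V - {u, v}) p s \<Longrightarrow> {s, u} \<in> E \<Longrightarrow> s = a"
proof -
  let ?W = "V - {u, v}"
  have uv: "u \<in> V" "v \<in> V" "u \<noteq> v" using edge_vertices \<open>{u, v} \<in> E\<close> by auto
  have "\<not> vertex_cut V E {v}" using no_cut by (simp add: no_cut_vertex_def)
  then have reach: "reach_in E (V - {v}) x y" if "x \<in> V - {v}" "y \<in> V - {v}" for x y
    using that uv unfolding vertex_cut_def by blast
  have sep': "\<not> reach_in E ?W q p" using sep reach_in_sym by metis
  obtain a where a: "a \<in> ?W" "reach_in E ?W p a" "{a, u} \<in> E"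
    using neighbour_in_component[OF sep pq reach] pq by blast
  obtain b where b: "b \<in> ?W" "reach_in E ?W q b" "{b, u} \<in> E"
    using neighbour_in_component[OF sep' pq(2,1) reach] pq by blast
  have apart: "\<not> reach_in E ?W q x" if "reach_in E ?W p x" for x
    using that sep reach_in_sym reach_in_trans by metis
  have "a \<noteq> b" using apart a(2) b(2) by blast
  have "{v, a, b} \<subseteq> neighbours E u"
    using a(3) b(3) \<open>{u, v} \<in> E\<close> by (simp add: insert_commute)
  moreover have "card {v, a, b} = 3" using a(1) b(1) \<open>a \<noteq> b\<close> by auto
  ultimately have nb_u: "neighbours E u = {v, a, b}"
    using cubic uv(1) finite_neighbours card_subset_eq unfolding degree_def by metis
  show thesis
  proof (rule that[OF a])
    fix s assume "s \<in> ?W" "reach_in E ?W p s" "{s, u} \<in> E"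
    then have "s \<in> {v, a, b}" "s \<noteq> v" "s \<noteq> b"
      using nb_u apart b(2) by (auto simp: insert_commute)
    then show "s = a" by simp
  qed
qed

lemma exists_neighbour_not_in:
  assumes "finite A" "card A < degree E x"
  obtains y where "{x, y} \<in> E" "y \<notin> A"
  using exists_not_in[OF assms(1)] assms(2) unfolding degree_def by (metis mem_neighbours)

lemma cubic_adjacent_2_cut:
  assumes cubic: "\<forall>x\<in>V. degree E x = 3" and no_cut: "no_cut_vertex V E" and "{u, v} \<in> E"
    and sep: "\<not> reach_in E (V - {u, v}) p q" and pq: "p \<in> V - {u, v}" "q \<in> V - {u, v}"
  shows "\<exists>T. vertex_cut V E T \<and> card T = 2 \<and> independent_set V E T"
proof -
  let ?W = "V - {u, v}"
  have uv: "u \<in> V" "v \<in> V" "u \<noteq> v" using edge_vertices \<open>{u, v} \<in> E\<close> by auto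
  obtain a where a: "a \<in> ?W" "reach_in E ?W p a" "{a, u} \<in> E"
    and a_unique: "\<And>s. s \<in> ?W \<Longrightarrow> reach_in E ?W p s \<Longrightarrow> {s, u} \<in> E \<Longrightarrow> s = a"
    by (rule cubic_unique_neighbour_in_component[OF cubic no_cut \<open>{u, v} \<in> E\<close> sep pq]) (rule that)
  have vu: "{v, u} \<in> E" "V - {v, u} = ?W" using \<open>{u, v} \<in> E\<close> by (auto simp: insert_commute)
  obtain b where b_unique: "\<And>s. s \<in> ?W \<Longrightarrow> reach_in E ?W p s \<Longrightarrow> {s, v} \<in> E \<Longrightarrow> s = b"
  proof (rule cubic_unique_neighbour_in_component[OF cubic no_cut vu(1), of p q])
    show "\<not> reach_in E (V - {v, u}) p q" "p \<in> V - {v, u}" "q \<in> V - {v, u}"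
      using sep pq by (simp_all add: vu(2))
  qed (unfold vu(2), rule that, assumption)
  obtain a' where a': "{a, a'} \<in> E" "a' \<notin> {u, v}"
  proof (rule exists_neighbour_not_in)
    show "card {u, v} < degree E a" using cubic a(1) card_doubleton_le[of u v] by simp
  qed simp_all
  \<comment> \<open>the side of \<open>p\<close> without \<open>a\<close> is attached to the rest only through \<open>a\<close> and \<open>v\<close>\<close>
  define X where "X = {z \<in> ?W. reach_in E ?W p z} - {a}"
  have "a' \<in> X" "a' \<noteq> a" "a' \<in> V" "u \<notin> X" "a \<in> V"
    using a a' edge_vertices[of a a'] reach_in_step[OF a(2) a(1) _ a'(1)] by (auto simp: X_def)
  have closed: "t \<in> X" if "s \<in> X" "t \<in> V - {a}" "{s, t} \<in> E" "t \<noteq> v" for s t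
  proof -
    have s: "s \<in> ?W" "reach_in E ?W p s" "s \<noteq> a" using that(1) by (auto simp: X_def)
    then have "t \<noteq> u" using a_unique that(3) by auto
    then show ?thesis
      using that(2,4) reach_in_step[OF s(2,1) _ that(3)] by (auto simp: X_def)
  qed
  show ?thesis
  proof (cases "{a, v} \<in> E")
    case True
    \<comment> \<open>then \<open>a\<close> is also the unique neighbour of \<open>v\<close> on \<open>p\<close>'s side, so \<open>a\<close> alone separates\<close>
    have "t \<noteq> v" if "s \<in> X" "{s, t} \<in> E" for s t
      using that b_unique[of s] b_unique[of a] True a(1,2) by (auto simp: X_def)
    then have "vertex_cut V E {a}"
      using closed \<open>a' \<in> X\<close> \<open>a' \<noteq> a\<close> \<open>a' \<in> V\<close> \<open>u \<notin> X\<close> \<open>a \<in> V\<close> uv a(1) a'(2) a'(2)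
      by (intro vertex_cut_closed_set[of "{a}" V a' X u]) auto
    with no_cut show ?thesis by (simp add: no_cut_vertex_def)
  next
    case False
    have "vertex_cut V E {a, v}"
      using closed \<open>a' \<in> X\<close> \<open>a' \<noteq> a\<close> \<open>a' \<in> V\<close> \<open>u \<notin> X\<close> \<open>a \<in> V\<close> uv a(1) a'(2) a'(2)
      by (intro vertex_cut_closed_set[of "{a, v}" V a' X u]) auto
    moreover have "card {a, v} = 2" using a(1) by auto
    ultimately show ?thesis using independent_set_pair[OF \<open>a \<in> V\<close> uv(2) False] by blast
  qed
qed

lemma cubic_independent_2_cut:
  assumes cubic: "\<forall>x\<in>V. degree E x = 3" and no_cut: "no_cut_vertex V E"
    and cut: "vertex_cut V E {u, v}"
  shows "\<exists>T. vertex_cut V E T \<and> card T = 2 \<and> independent_set V E T"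
proof -
  have "u \<noteq> v" using cut no_cut by (auto simp: no_cut_vertex_def)
  obtain p q where uv: "u \<in> V" "v \<in> V" and pq: "p \<in> V - {u, v}" "q \<in> V - {u, v}"
    and sep: "\<not> reach_in E (V - {u, v}) p q"
    using cut unfolding vertex_cut_def by blast
  show ?thesis
  proof (cases "{u, v} \<in> E")
    case False
    then show ?thesis using cut \<open>u \<noteq> v\<close> independent_set_pair[OF uv] by fastforce
  qed (rule cubic_adjacent_2_cut[OF cubic no_cut _ sep pq])
qed

context
  assumes cubic: "\<forall>x\<in>V. degree E x = 3" and order: "7 \<le> card V"
    and three_connected: "\<And>S. vertex_cut V E S \<Longrightarrow> 3 \<le> card S"
begin

lemma cubic_neighbours_distinct:
  assumes "x \<in> V" "neighbours E x = {y, z, p}"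
  shows "y \<noteq> z \<and> y \<noteq> p \<and> z \<noteq> p"
proof -
  have "card (neighbours E x) = 3" using assms(1) cubic by (simp add: degree_def)
  then show ?thesis unfolding assms(2) by (rule card_3_distinct)
qed

lemma triangle_no_common_outer_neighbour:
  assumes "x \<in> V" "neighbours E x = {y, z, p}" "neighbours E y = {x, z, p}"
  shows False
proof -
  have "x \<notin> {y, z, p}" "y \<notin> {x, z, p}"
    using not_in_neighbours_self[of x] not_in_neighbours_self[of y] assms(2,3) by simp_all
  moreover have "{y, z, p} \<subseteq> V" "{x, z, p} \<subseteq> V"
    using neighbours_subset[of x] neighbours_subset[of y] assms(2,3) by simp_all
  moreover have "card ({p, z} \<union> {x, y}) < card V"
    using order card_Un_le[of "{p, z}" "{x, y}"] card_doubleton_le[of p z] card_doubleton_le[of x y]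
    by linarith
  ultimately have "vertex_cut V E {p, z}"
  proof (intro vertex_cut_separating[of "{p, z}" x "{x, y}"])
    show "neighbours E v \<subseteq> {p, z} \<union> {x, y}" if "v \<in> {x, y}" for v
      using that assms(2,3) by auto
  qed auto
  then have "3 \<le> card {p, z}" by (rule three_connected)
  with card_doubleton_le[of p z] show False by linarith
qed

lemma triangle_distinct:
  assumes "x \<in> V" and nb: "neighbours E x = {y, z, p}" "neighbours E y = {x, z, q}"
      "neighbours E z = {x, y, r}"
  shows "distinct [x, y, z, p, q, r]"
proof -
  have V: "y \<in> V" "z \<in> V"
    using neighbours_subset[of x] nb(1) by auto
  have "x \<notin> {y, z, p}" "y \<notin> {x, z, q}" "z \<notin> {x, y, r}"
    using not_in_neighbours_self[of x] not_in_neighbours_self[of y] not_in_neighbours_self[of z] nb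
    by simp_all
  moreover have "y \<noteq> z \<and> y \<noteq> p \<and> z \<noteq> p" "x \<noteq> z \<and> x \<noteq> q \<and> z \<noteq> q"
      "x \<noteq> y \<and> x \<noteq> r \<and> y \<noteq> r"
    using cubic_neighbours_distinct[OF \<open>x \<in> V\<close> nb(1)] cubic_neighbours_distinct[OF V(1) nb(2)]
      cubic_neighbours_distinct[OF V(2) nb(3)] by simp_all
  moreover have "p \<noteq> q"
    using triangle_no_common_outer_neighbour[OF \<open>x \<in> V\<close> nb(1)] nb(2) by blast
  moreover have "q \<noteq> r"
  proof
    assume "q = r"
    with nb(2,3) show False
      by (intro triangle_no_common_outer_neighbour[OF V(1), of z x q]) (auto simp: insert_commute)
  qed
  moreover have "p \<noteq> r"
  proof
    assume "p = r"
    with nb(1,3) show False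
      by (intro triangle_no_common_outer_neighbour[OF \<open>x \<in> V\<close>, of z y p]) (auto simp: insert_commute)
  qed
  ultimately show ?thesis by simp
qed

lemma triangle_independent_cut:
  assumes "x \<in> V" and nb: "neighbours E x = {y, z, p}" "neighbours E y = {x, z, q}"
      "neighbours E z = {x, y, r}"
    and "{q, r} \<notin> E"
  shows "vertex_cut V E {x, q, r} \<and> card {x, q, r} = 3 \<and> independent_set V E {x, q, r}"
proof -
  have V: "y \<in> V" "z \<in> V" "q \<in> V" "r \<in> V"
    using neighbours_subset[of x] neighbours_subset[of y] neighbours_subset[of z] nb by auto
  have distinct: "distinct [x, y, z, p, q, r]" by (rule triangle_distinct[OF assms(1-4)])
  have "vertex_cut V E {x, q, r}"
  proof (rule vertex_cut_separating[of "{x, q, r}" y "{y, z}"])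
    show "card ({x, q, r} \<union> {y, z}) < card V"
      using order card_Un_le[of "{x, q, r}" "{y, z}"] card_length[of "[x, q, r]"]
        card_doubleton_le[of y z]
      by simp
    show "neighbours E v \<subseteq> {x, q, r} \<union> {y, z}" if "v \<in> {y, z}" for v
      using that nb(2,3) by auto
    show "{x, q, r} \<subseteq> V" "y \<in> {y, z}" using V \<open>x \<in> V\<close> by simp_all
    show "{y, z} \<subseteq> V - {x, q, r}" using V(1,2) distinct by auto
  qed
  moreover have "q \<notin> neighbours E x" "r \<notin> neighbours E x"
    using distinct unfolding nb(1) by auto
  then have "independent_set V E {x, q, r}"
    using \<open>{q, r} \<notin> E\<close> V(3,4) \<open>x \<in> V\<close> by (intro independent_set_triple) simp_all
  ultimately show ?thesis using distinct by simp
qed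

lemma triangle_outer_neighbours:
  assumes "c \<in> V" "{c, a} \<in> E" "{c, b} \<in> E" "{a, b} \<in> E"
  obtains a' b' c' where "neighbours E a = {b, c, a'}" "neighbours E b = {a, c, b'}"
    "neighbours E c = {a, b, c'}" "distinct [a, b, c, a', b', c']"
proof -
  have V: "a \<in> V" "b \<in> V" "a \<noteq> b" "a \<noteq> c" "b \<noteq> c"
    using edge_vertices assms(2-4) by blast+
  have card3: "card (neighbours E v) = 3" if "v \<in> V" for v using cubic that by (simp add: degree_def)
  obtain c' where nb_c: "neighbours E c = {a, b, c'}"
    by (rule card_3_obtain_third[OF card3[OF \<open>c \<in> V\<close>], of a b]) (use assms V in auto)
  obtain a' where nb_a: "neighbours E a = {b, c, a'}"
    by (rule card_3_obtain_third[OF card3[OF V(1)], of b c]) (use assms V in \<open>auto simp: insert_commute\<close>)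
  obtain b' where nb_b: "neighbours E b = {a, c, b'}"
    by (rule card_3_obtain_third[OF card3[OF V(2)], of a c]) (use assms V in \<open>auto simp: insert_commute\<close>)
  have "distinct [a, b, c, a', b', c']" by (rule triangle_distinct[OF V(1) nb_a nb_b nb_c])
  with nb_a nb_b nb_c show thesis by (rule that)
qed

lemma no_cubic_prism_component:
  assumes "a \<in> V"
    and "neighbours E a = {b, c, a'}" "neighbours E b = {a, c, b'}" "neighbours E c = {a, b, c'}"
    and "neighbours E a' = {a, b', c'}" "neighbours E b' = {b, a', c'}" "neighbours E c' = {c, a', b'}"
  shows False
proof -
  define X where "X = {a, b, c, a', b', c'}"
  have "vertex_cut V E {}"
  proof (rule vertex_cut_separating[of "{}" a X])
    show "card ({} \<union> X) < card V" using order card_length[of "[a, b, c, a', b', c']"] by (simp add: X_def)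
    show "neighbours E v \<subseteq> {} \<union> X" if "v \<in> X" for v
      using that assms(2-7) by (auto simp: X_def)
    show "X \<subseteq> V - {}"
      using assms neighbours_subset[of a] neighbours_subset[of a'] by (auto simp: X_def)
  qed (use assms(1) in \<open>simp_all add: X_def\<close>)
  then show False using three_connected by fastforce
qed

lemma cubic_independent_3_cut: "\<exists>T. vertex_cut V E T \<and> card T = 3 \<and> independent_set V E T"
proof (rule ccontr)
  assume no_indep: "\<not> ?thesis"
  have outer_adjacent: "{q, r} \<in> E"
    if "x \<in> V" "neighbours E x = {y, z, p}" "neighbours E y = {x, z, q}" "neighbours E z = {x, y, r}"
    for x y z p q r
    using triangle_independent_cut[OF that] no_indep by blast
  obtain c where "c \<in> V" using order by fastforce
  then have "vertex_cut V E (neighbours E c)" "card (neighbours E c) = 3"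
    using neighbours_vertex_cut cubic order by (auto simp: degree_def)
  then have "\<not> independent_set V E (neighbours E c)" using no_indep by blast
  then obtain a b where "{c, a} \<in> E" "{c, b} \<in> E" "{a, b} \<in> E"
    unfolding independent_set_def using neighbours_subset by auto
  then obtain a' b' c' where nb_a: "neighbours E a = {b, c, a'}"
    and nb_b: "neighbours E b = {a, c, b'}" and nb_c: "neighbours E c = {a, b, c'}"
    and distinct: "distinct [a, b, c, a', b', c']"
    using triangle_outer_neighbours[OF \<open>c \<in> V\<close>] by blast
  have V: "a \<in> V" "b \<in> V" "a' \<in> V" "b' \<in> V" "c' \<in> V"
    using neighbours_subset[of a] neighbours_subset[of b] neighbours_subset[of c] nb_a nb_b nb_c
    by auto
  \<comment> \<open>otherwise one of the three cuts \<open>{a, b', c'}\<close>, \<open>{b, c', a'}\<close>, \<open>{c, a', b'}\<close> is independent\<close>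
  have "{b', c'} \<in> E" "{c', a'} \<in> E" "{a', b'} \<in> E"
    using outer_adjacent[OF V(1) nb_a nb_b nb_c] outer_adjacent[OF V(2), of c a b' c' a']
      outer_adjacent[OF \<open>c \<in> V\<close>, of a b c' a' b'] nb_a nb_b nb_c
    by (simp_all add: insert_commute)
  then have "{a, b', c'} \<subseteq> neighbours E a'" "{b, a', c'} \<subseteq> neighbours E b'"
    "{c, a', b'} \<subseteq> neighbours E c'"
    using nb_a nb_b nb_c by (auto simp: insert_commute set_eq_iff)
  moreover have "card {a, b', c'} = 3" "card {b, a', c'} = 3" "card {c, a', b'} = 3"
    using distinct by auto
  moreover have "card (neighbours E v) = 3" if "v \<in> V" for v using cubic that by (simp add: degree_def)
  ultimately have "neighbours E a' = {a, b', c'}" "neighbours E b' = {b, a', c'}"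
    "neighbours E c' = {c, a', b'}"
    using V finite_neighbours by (metis card_subset_eq)+
  with V(1) nb_a nb_b nb_c show False by (rule no_cubic_prism_component)
qed

end

end

section \<open>Sparse graphs\<close>

text \<open>For at least 7 vertices the bound reads \<open>3 n + 1 \<le> 2 m\<close>; the weaker term \<open>4 n - 6\<close>
  is what survives the induction through small graphs such as \<open>K\<^sub>4\<close> minus an edge.\<close>

lemma edge_bound_if_degree_2_vertex:
  assumes "simple_graph V E" "connected_graph V E" "no_cut_vertex V E" "two_cuts_adjacent V E"
    and "w \<in> V" "degree E w \<le> 2"
  shows "min (3 * card V + 1) (4 * card V - 6) \<le> 2 * card E"
  using assms
proof (induction "card V" arbitrary: V E w rule: less_induct)
  case less
  note graph = less.prems(1)
  show ?case
  proof (cases "card V \<le> 3")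
    case True
    have "min (3 * n + 1) (4 * n - 6) \<le> n * (n - 1)" if small: "n \<le> 3" for n :: nat
    proof -
      consider "n = 0" | "n = 1" | "n = 2" | "n = 3" using small by linarith
      then show ?thesis by cases simp_all
    qed
    with small_graph_edge_bound[OF graph less.prems(2,3) True] True show ?thesis by (meson le_trans)
  next
    case False
    then have "4 \<le> card V" by simp
    then have deg: "degree E w = 2" and simplicial: "simplicial E w"
      using degree_2_vertex_simplicial[OF graph less.prems(2-6)] by simp_all
    define V' where "V' = V - {w}"
    define E' where "E' = {e \<in> E. w \<notin> e}"
    have graph': "simple_graph V' E'"
      unfolding V'_def E'_def by (rule simple_graph_delete_vertex[OF graph])
    have reduced: "connected_graph V' E'" "no_cut_vertex V' E'" "two_cuts_adjacent V' E'"
      using delete_simplicial_vertex[OF graph less.prems(2-4) simplicial] False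
      unfolding V'_def E'_def by simp_all
    have card_V: "card V = card V' + 1"
      using less.prems(5) finite_vertices[OF graph] False by (simp add: V'_def)
    have card_E: "card E = card E' + 2"
      using card_edges_delete_vertex[OF graph, of w] deg by (simp add: E'_def)
    have "min (3 * card V') (4 * card V' - 6) \<le> 2 * card E'"
    proof (cases "\<exists>u\<in>V'. degree E' u \<le> 2")
      case True
      then obtain u where "u \<in> V'" "degree E' u \<le> 2" by blast
      from less.hyps[OF _ graph' reduced this] card_V show ?thesis by simp
    next
      case False
      then have "card V' * 3 \<le> 2 * card E'"
        using sum_bounded_below[of V' 3 "degree E'"] by (force simp: sum_degree[OF graph'])
      then show ?thesis by simp
    qed
    then show ?thesis using card_V card_E False by (auto simp: min_le_iff_disj)
  qed
qed

lemma independent_2_cut_if_sparse: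
  assumes graph: "simple_graph V E" and conn: "connected_graph V E"
    and order: "7 \<le> card V" and sparse: "2 * card E \<le> 3 * card V"
    and no_cut: "no_cut_vertex V E" and cut: "vertex_cut V E {u, v}"
  shows "\<exists>T. vertex_cut V E T \<and> card T = 2 \<and> independent_set V E T"
proof (cases "two_cuts_adjacent V E")
  case False
  then obtain a b where "a \<noteq> b" "vertex_cut V E {a, b}" "{a, b} \<notin> E"
    by (auto simp: two_cuts_adjacent_def)
  moreover from this have "independent_set V E {a, b}"
    by (intro independent_set_pair[OF graph]) (auto simp: vertex_cut_def)
  ultimately show ?thesis by fastforce
next
  case True
  have "\<forall>x\<in>V. 3 \<le> degree E x"
  proof (rule ccontr)
    assume "\<not> ?thesis"
    then obtain w where "w \<in> V" "degree E w \<le> 2" by force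
    from edge_bound_if_degree_2_vertex[OF graph conn no_cut True this] order sparse
    show False by simp
  qed
  then have "\<forall>x\<in>V. degree E x = 3" using regular_if_min_degree[OF graph _ sparse] by blast
  then show ?thesis using cubic_independent_2_cut[OF graph _ no_cut cut] by blast
qed

lemma independent_3_cut_if_sparse:
  assumes graph: "simple_graph V E" and order: "7 \<le> card V" and sparse: "2 * card E \<le> 3 * card V"
    and three_connected: "\<And>S. vertex_cut V E S \<Longrightarrow> 3 \<le> card S"
  shows "\<exists>T. vertex_cut V E T \<and> card T = 3 \<and> independent_set V E T"
proof -
  have "\<forall>x\<in>V. 3 \<le> degree E x"
  proof (rule ccontr)
    assume "\<not> ?thesis"
    then obtain w where "w \<in> V" "degree E w < 3" by force
    then have "vertex_cut V E (neighbours E w)"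
      using order by (intro neighbours_vertex_cut[OF graph]) auto
    with \<open>degree E w < 3\<close> three_connected show False by (fastforce simp: degree_def)
  qed
  then have "\<forall>x\<in>V. degree E x = 3" using regular_if_min_degree[OF graph _ sparse] by blast
  then show ?thesis using cubic_independent_3_cut[OF graph _ order three_connected] by blast
qed

theorem has_indep_min_cut_if_sparse:
  assumes graph: "simple_graph V E" and conn: "connected_graph V E"
    and order: "7 \<le> card V" and sparse: "2 * card E \<le> 3 * card V"
  shows "has_indep_min_cut V E"
proof -
  obtain v where "v \<in> V" "degree E v < 4"
    using exists_degree_less[OF graph, of 4] sparse order by force
  then have "vertex_cut V E (neighbours E v)"
    using order by (intro neighbours_vertex_cut[OF graph]) auto
  then obtain S where min_cut: "min_vertex_cut V E S" by (rule min_vertex_cut_exists)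
  then have cut: "vertex_cut V E S" and minimal: "\<And>T. vertex_cut V E T \<Longrightarrow> card S \<le> card T"
    by (auto simp: min_vertex_cut_def)
  have "card S \<le> 3"
    using minimal[OF \<open>vertex_cut V E (neighbours E v)\<close>] \<open>degree E v < 4\<close> by (simp add: degree_def)
  moreover have "S \<noteq> {}" using cut conn by (auto simp: connected_graph_iff)
  moreover have "finite S"
    using cut finite_vertices[OF graph] by (auto simp: vertex_cut_def intro: finite_subset)
  ultimately have "card S \<noteq> 0" "card S \<le> 3" by simp_all
  then consider "card S = 1" | "card S = 2" | "card S = 3" by linarith
  then show ?thesis
  proof cases
    case 1
    then obtain s where "S = {s}" by (rule card_1_singletonE)
    then show ?thesis
      using cut independent_set_singleton[OF graph] has_indep_min_cutI[OF min_cut cut]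
      by (auto simp: vertex_cut_def)
  next
    case 2
    then obtain u w where "S = {u, w}" by (meson card_2_iff)
    moreover have "no_cut_vertex V E" using minimal 2 by (fastforce simp: no_cut_vertex_def)
    ultimately show ?thesis
      using independent_2_cut_if_sparse[OF graph conn order sparse] cut 2
        has_indep_min_cutI[OF min_cut] by fastforce
  next
    case 3
    then show ?thesis
      using independent_3_cut_if_sparse[OF graph order sparse] minimal
        has_indep_min_cutI[OF min_cut] by fastforce
  qed
qed

section \<open>The eared prism\<close>

definition cycle_next :: "nat \<Rightarrow> nat \<Rightarrow> nat" where
  "cycle_next k j = (if Suc j = k then 0 else Suc j)"

text \<open>The prism \<open>C\<^sub>k \<times> K\<^sub>2\<close> on the vertices \<open>0..<2 k\<close> (outer cycle \<open>0..<k\<close>, inner cycle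
  \<open>k..<2 k\<close>, rungs \<open>{j, k + j}\<close>), with each of the remaining vertices \<open>2 k..<n\<close> joined to both
  ends of the rung \<open>{0, k}\<close>.\<close>

definition eared_prism :: "nat \<Rightarrow> nat \<Rightarrow> nat set set" where
  "eared_prism n k =
     (\<lambda>j. {j, cycle_next k j}) ` {..<k} \<union> (\<lambda>j. {k + j, k + cycle_next k j}) ` {..<k}
     \<union> (\<lambda>j. {j, k + j}) ` {..<k} \<union> (\<lambda>e. {e, 0}) ` {2 * k..<n} \<union> (\<lambda>e. {e, k}) ` {2 * k..<n}"

lemma cycle_next_less: "j < k \<Longrightarrow> cycle_next k j < k"
  unfolding cycle_next_def by auto

lemma cycle_next_neq: "2 \<le> k \<Longrightarrow> cycle_next k j \<noteq> j"
  unfolding cycle_next_def by auto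

lemma reach_in_consecutive:
  assumes "i \<le> j" "\<And>t. i \<le> t \<Longrightarrow> t \<le> j \<Longrightarrow> c + t \<in> W"
    and "\<And>t. i \<le> t \<Longrightarrow> t < j \<Longrightarrow> {c + t, c + Suc t} \<in> E"
  shows "reach_in E W (c + i) (c + j)"
  using assms
proof (induction j)
  case (Suc j)
  show ?case
  proof (cases "i = Suc j")
    case False
    then have "i \<le> j" using Suc.prems(1) by simp
    then have "reach_in E W (c + i) (c + j)" using Suc.IH Suc.prems by simp
    moreover have "c + j \<in> W" "c + Suc j \<in> W" "{c + j, c + Suc j} \<in> E"
      using Suc.prems(2)[of j] Suc.prems(2)[of "Suc j"] Suc.prems(3)[of j] \<open>i \<le> j\<close> by simp_all
    ultimately show ?thesis by (rule reach_in_step)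
  qed simp
qed simp

lemma reach_in_cycle_minus_vertex:
  assumes k: "1 \<le> k"
    and edges: "\<And>j. j < k \<Longrightarrow> {c + j, c + cycle_next k j} \<in> E"
    and W: "\<And>j. j < k \<Longrightarrow> j \<noteq> z \<Longrightarrow> c + j \<in> W"
    and a: "a < k" "a \<noteq> z" and b: "b < k" "b \<noteq> z"
  shows "reach_in E W (c + a) (c + b)"
proof -
  have step: "{c + t, c + Suc t} \<in> E" if "Suc t < k" for t
    using edges[of t] that unfolding cycle_next_def by auto
  define h where "h = (if z = k - 1 then 0 else k - 1)"
  have "reach_in E W (c + x) (c + h)" if x: "x < k" "x \<noteq> z" for x
  proof (cases "z = k - 1")
    case True
    have "reach_in E W (c + 0) (c + x)"
      by (rule reach_in_consecutive) (use x True k W step in auto)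
    then show ?thesis using True reach_in_sym by (simp add: h_def)
  next
    case last: False
    show ?thesis
    proof (cases "z < x")
      case True
      have "reach_in E W (c + x) (c + (k - 1))"
        by (rule reach_in_consecutive) (use x True k W step in auto)
      then show ?thesis using last by (simp add: h_def)
    next
      case False
      have "reach_in E W (c + 0) (c + x)"
        by (rule reach_in_consecutive) (use x False k W step in auto)
      moreover have "{c + 0, c + (k - 1)} \<in> E"
        using edges[of "k - 1"] k by (simp add: cycle_next_def insert_commute)
      then have "reach_in E W (c + 0) (c + (k - 1))"
        using W[of 0] W[of "k - 1"] k last x False by (intro reach_in_edge) auto
      ultimately show ?thesis using last reach_in_sym reach_in_trans by (metis h_def)
    qed
  qed
  then show ?thesis using a b reach_in_sym reach_in_trans by metis
qed

lemma eared_prism_edges: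
  shows outer_edge: "j < k \<Longrightarrow> {j, cycle_next k j} \<in> eared_prism n k"
    and inner_edge: "j < k \<Longrightarrow> {k + j, k + cycle_next k j} \<in> eared_prism n k"
    and rung_edge: "j < k \<Longrightarrow> {j, k + j} \<in> eared_prism n k"
    and ear_edges: "2 * k \<le> e \<Longrightarrow> e < n \<Longrightarrow> {e, 0} \<in> eared_prism n k"
      "2 * k \<le> e \<Longrightarrow> e < n \<Longrightarrow> {e, k} \<in> eared_prism n k"
  unfolding eared_prism_def by auto

lemma eared_prism_cases:
  assumes "x \<in> eared_prism n k"
  obtains (outer) j where "j < k" "x = {j, cycle_next k j}"
    | (inner) j where "j < k" "x = {k + j, k + cycle_next k j}"
    | (rung) j where "j < k" "x = {j, k + j}"
    | (ear0) e where "2 * k \<le> e" "e < n" "x = {e, 0}"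
    | (eark) e where "2 * k \<le> e" "e < n" "x = {e, k}"
  using assms unfolding eared_prism_def by fastforce

lemma reach_in_prism_minus_intact_cycle:
  assumes k: "3 \<le> k" and c: "c \<in> {0, k}" and intact: "\<forall>j<k. c + j \<notin> R"
    and x: "x < 2 * k" "x \<notin> R"
  shows "reach_in (eared_prism n k) ({0..<2 * k} - R) x c"
proof -
  let ?E = "eared_prism n k" and ?W = "{0..<2 * k} - R"
  have cycle: "reach_in ?E ?W (c + j) (c + 0)" if "j < k" for j
  proof (rule reach_in_cycle_minus_vertex[where z = k])
    show "{c + i, c + cycle_next k i} \<in> ?E" if "i < k" for i
      using c that outer_edge inner_edge by auto
  qed (use k c intact that in auto)
  define d where "d = (if x < k then 0 else k)"
  define j where "j = x - d"
  have d: "d \<in> {0, k}" "j < k" "x = d + j" using x(1) by (auto simp: d_def j_def)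
  show ?thesis
  proof (cases "d = c")
    case True
    then show ?thesis using cycle[OF d(2)] d by simp
  next
    case False
    then have "{x, c + j} \<in> ?E" using c d rung_edge by (auto simp: insert_commute)
    then have "reach_in ?E ?W x (c + j)"
      using c d x intact k by (intro reach_in_edge) auto
    then show ?thesis using cycle[OF d(2)] reach_in_trans by fastforce
  qed
qed

lemma reach_in_prism_minus:
  assumes k: "3 \<le> k" and R: "finite R" "card R \<le> 2"
    and a: "a < 2 * k" "a \<notin> R" and b: "b < 2 * k" "b \<notin> R"
  shows "reach_in (eared_prism n k) ({0..<2 * k} - R) a b"
proof -
  let ?E = "eared_prism n k" and ?W = "{0..<2 * k} - R"
  consider (intact) c where "c \<in> {0, k}" "\<forall>j<k. c + j \<notin> R"
    | (both_hit) s t where "s < k" "s \<in> R" "t < k" "k + t \<in> R"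
  proof (cases "\<forall>j<k. 0 + j \<notin> R")
    case False
    then obtain s where "s < k" "s \<in> R" by auto
    then show ?thesis using that by (cases "\<forall>j<k. k + j \<notin> R") auto
  qed (use that(1)[of 0] in simp)
  then show ?thesis
  proof cases
    case (intact c)
    have "reach_in ?E ?W x c" if "x \<in> ?W" for x
      using that by (intro reach_in_prism_minus_intact_cycle[OF k intact]) auto
    then show ?thesis by (rule reach_in_via) (use a b in auto)
  next
    case (both_hit s t)
    then have "{s, k + t} \<subseteq> R" "card {s, k + t} = 2" by auto
    then have R_eq: "R = {s, k + t}" using card_seteq[OF R(1)] R(2) by (metis order_refl)
    define j :: nat where "j = (if 0 \<notin> {s, t} then 0 else if 1 \<notin> {s, t} then 1 else 2)"
    have j: "j < k" "j \<noteq> s" "j \<noteq> t" using k by (auto simp: j_def)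
    have outer: "reach_in ?E ?W (0 + x) (0 + j)" if "x < k" "x \<noteq> s" for x
    proof (rule reach_in_cycle_minus_vertex[where z = s])
      show "{0 + i, 0 + cycle_next k i} \<in> ?E" if "i < k" for i
        using outer_edge[OF that] by simp
      show "0 + i \<in> ?W" if "i < k" "i \<noteq> s" for i
        using that k by (simp add: R_eq)
    qed (use k j that in auto)
    have inner: "reach_in ?E ?W (k + y) (k + j)" if "y < k" "y \<noteq> t" for y
    proof (rule reach_in_cycle_minus_vertex[where z = t])
      show "{k + i, k + cycle_next k i} \<in> ?E" if "i < k" for i
        using inner_edge[OF that] .
      show "k + i \<in> ?W" if "i < k" "i \<noteq> t" for i
        using that both_hit(1) by (auto simp: R_eq)
    qed (use k j that in auto)
    have rung: "reach_in ?E ?W (k + j) j"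
      using j both_hit(1,3) rung_edge[of j k n] by (intro reach_in_edge) (auto simp: R_eq insert_commute)
    have "reach_in ?E ?W x j" if "x \<in> ?W" for x
    proof (cases "x < k")
      case True
      then show ?thesis using outer[of x] that by (simp add: R_eq)
    next
      case False
      then have "x - k < k" "x - k \<noteq> t" "x = k + (x - k)" using that by (auto simp: R_eq)
      then show ?thesis using inner[of "x - k"] rung reach_in_trans by metis
    qed
    then show ?thesis by (rule reach_in_via) (use a b in auto)
  qed
qed

lemma reach_in_eared_prism_minus:
  assumes k: "3 \<le> k" "2 * k < n" and R: "finite R" "card R \<le> 2" "\<not> {0, k} \<subseteq> R"
    and a: "a < n" "a \<notin> R" and b: "b < n" "b \<notin> R"
  shows "reach_in (eared_prism n k) ({0..<n} - R) a b"
proof -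
  let ?E = "eared_prism n k" and ?W = "{0..<n} - R"
  have "card R < card {0..<2 * k}" using R(2) k(1) by simp
  then obtain h where "h \<in> {0..<2 * k}" "h \<notin> R" by (rule exists_not_in[OF R(1)])
  then have h: "h < 2 * k" "h \<notin> R" by auto
  have prism: "reach_in ?E ?W x h" if "x < 2 * k" "x \<notin> R" for x
    using reach_in_prism_minus[OF k(1) R(1,2) that h]
    by (rule reach_in_subgraph) (use k(2) in auto)
  have "reach_in ?E ?W x h" if x: "x \<in> ?W" for x
  proof (cases "x < 2 * k")
    case False
    obtain c where "c \<in> {0, k}" "c \<notin> R" using R(3) by auto
    moreover from this have "{x, c} \<in> ?E" using False x ear_edges by auto
    ultimately have "reach_in ?E ?W x c" using x k by (intro reach_in_edge) auto
    moreover have "reach_in ?E ?W c h" using prism[of c] \<open>c \<in> {0, k}\<close> \<open>c \<notin> R\<close> k by auto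
    ultimately show ?thesis by (rule reach_in_trans)
  qed (use prism x in auto)
  then show ?thesis by (rule reach_in_via) (use a b in auto)
qed

lemma simple_graph_eared_prism:
  assumes k: "3 \<le> k" "2 * k < n"
  shows "simple_graph {0..<n} (eared_prism n k)"
  unfolding simple_graph_def
proof (intro conjI ballI)
  fix x assume "x \<in> eared_prism n k"
  then show "\<exists>u v. x = {u, v} \<and> u \<noteq> v \<and> u \<in> {0..<n} \<and> v \<in> {0..<n}"
  proof (cases rule: eared_prism_cases)
    case (outer j)
    then show ?thesis
      using cycle_next_less[of j k] cycle_next_neq[of k j] k by (intro exI) auto
  next
    case (inner j)
    then show ?thesis
      using cycle_next_less[of j k] cycle_next_neq[of k j] k by (intro exI) auto
  qed (use k in \<open>(intro exI, auto)+\<close>)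
qed simp

lemma eared_prism_ear_neighbour:
  assumes "3 \<le> k" "{2 * k, t} \<in> eared_prism n k"
  shows "t \<in> {0, k}"
  using assms(2)
proof (cases rule: eared_prism_cases)
  case (outer j)
  then show ?thesis using cycle_next_less[of j k] by (auto simp: doubleton_eq_iff)
next
  case (inner j)
  then show ?thesis using cycle_next_less[of j k] by (auto simp: doubleton_eq_iff)
qed (use assms(1) in \<open>auto simp: doubleton_eq_iff\<close>)

lemma card_eared_prism:
  assumes k: "3 \<le> k" "2 * k \<le> n"
  shows "card (eared_prism n k) = 3 * k + 2 * (n - 2 * k)"
proof -
  define A1 where "A1 = (\<lambda>j. {j, cycle_next k j}) ` {..<k}"
  define A2 where "A2 = (\<lambda>j. {k + j, k + cycle_next k j}) ` {..<k}"
  define A3 where "A3 = (\<lambda>j. {j, k + j}) ` {..<k}"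
  define A4 where "A4 = (\<lambda>e. {e, 0}) ` {2 * k..<n}"
  define A5 where "A5 = (\<lambda>e. {e, k}) ` {2 * k..<n}"
  have "eared_prism n k = A1 \<union> A2 \<union> A3 \<union> A4 \<union> A5"
    unfolding eared_prism_def A1_def A2_def A3_def A4_def A5_def ..
  moreover have "card A1 = k" "card A2 = k" "card A3 = k" "card A4 = n - 2 * k" "card A5 = n - 2 * k"
    unfolding A1_def A2_def A3_def A4_def A5_def using k
    by (auto simp: card_image inj_on_def doubleton_eq_iff cycle_next_def split: if_splits)
  moreover have "A1 \<inter> A2 = {}" "(A1 \<union> A2) \<inter> A3 = {}" "(A1 \<union> A2 \<union> A3) \<inter> A4 = {}"
    "(A1 \<union> A2 \<union> A3 \<union> A4) \<inter> A5 = {}"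
    unfolding A1_def A2_def A3_def A4_def A5_def using k cycle_next_less[of _ k]
    by (auto simp: doubleton_eq_iff cycle_next_def split: if_splits)
  moreover have "finite A1" "finite A2" "finite A3" "finite A4" "finite A5"
    unfolding A1_def A2_def A3_def A4_def A5_def by auto
  ultimately show ?thesis by (simp add: card_Un_disjoint)
qed

theorem sparse_graph_without_indep_min_cut:
  assumes "7 \<le> n"
  obtains V :: "nat set" and E where "simple_graph V E" "connected_graph V E" "card V = n"
    "card E = 3 * n div 2 + 1" "\<not> has_indep_min_cut V E"
proof
  define k where "k = (n - 1) div 2"
  have k: "3 \<le> k" "2 * k < n" "n \<le> 2 * k + 2" using assms by (auto simp: k_def)
  let ?V = "{0..<n}" and ?E = "eared_prism n k"
  have reach: "reach_in ?E (?V - R) a b"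
    if "finite R" "card R \<le> 2" "\<not> {0, k} \<subseteq> R" "a \<in> ?V - R" "b \<in> ?V - R" for R a b
    using reach_in_eared_prism_minus[OF k(1,2) that(1-3)] that(4,5) by auto
  show "simple_graph ?V ?E" using simple_graph_eared_prism[OF k(1,2)] .
  show "connected_graph ?V ?E"
    using reach[of "{}"] assms unfolding connected_graph_def by auto
  show "card ?V = n" by simp
  show "card ?E = 3 * n div 2 + 1"
    using card_eared_prism[OF k(1)] k by (cases "n = 2 * k + 1") auto
  have "neighbours ?E (2 * k) \<subseteq> {0, k}"
    using eared_prism_ear_neighbour[OF k(1)] by (simp add: subset_iff)
  then have "vertex_cut ?V ?E {0, k}"
    using k by (intro vertex_cut_separating[OF simple_graph_eared_prism[OF k(1,2)], of _ "2 * k" "{2 * k}"])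
      auto
  show "\<not> has_indep_min_cut ?V ?E"
  proof
    assume "has_indep_min_cut ?V ?E"
    then obtain S where S: "min_vertex_cut ?V ?E S" "independent_set ?V ?E S"
      unfolding has_indep_min_cut_def by blast
    then have cut: "vertex_cut ?V ?E S" and "card S \<le> card {0, k}"
      using \<open>vertex_cut ?V ?E {0, k}\<close> by (auto simp: min_vertex_cut_def)
    moreover have "finite S" using cut by (auto simp: vertex_cut_def intro: finite_subset)
    moreover have "\<not> {0, k} \<subseteq> S"
      using S(2) rung_edge[of 0 k n] k unfolding independent_set_def by auto
    ultimately show False
      using reach card_doubleton_le[of 0 k] unfolding vertex_cut_def by (meson le_trans)
  qed
qed

theorem theorem3:
  shows "(\<forall>(V :: 'a set) (E :: 'a set set) n.
            n \<ge> 7 \<and> simple_graph V E \<and> connected_graph V E \<and> order V E = n \<and>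
            graph_size V E \<le> (3 * n) div 2 \<longrightarrow> has_indep_min_cut V E)
       \<and> (\<forall>n::nat. n \<ge> 7 \<longrightarrow>
            (\<exists>(V :: nat set) (E :: nat set set).
               simple_graph V E \<and> connected_graph V E \<and> order V E = n \<and>
               graph_size V E = (3 * n) div 2 + 1 \<and> \<not> has_indep_min_cut V E))"
proof (intro conjI allI impI)
  fix V :: "'a set" and E n
  assume "n \<ge> 7 \<and> simple_graph V E \<and> connected_graph V E \<and> order V E = n \<and>
    graph_size V E \<le> (3 * n) div 2"
  then show "has_indep_min_cut V E"
    by (intro has_indep_min_cut_if_sparse) (auto simp: order_def graph_size_def)
next
  fix n :: nat
  assume "n \<ge> 7"
  then obtain V :: "nat set" and E where "simple_graph V E" "connected_graph V E" "card V = n"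
    "card E = 3 * n div 2 + 1" "\<not> has_indep_min_cut V E"
    by (rule sparse_graph_without_indep_min_cut)
  then show "\<exists>(V :: nat set) E. simple_graph V E \<and> connected_graph V E \<and> order V E = n \<and>
      graph_size V E = (3 * n) div 2 + 1 \<and> \<not> has_indep_min_cut V E"
    by (auto simp: order_def graph_size_def)
qed

end
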